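(* Let $i\ge 3$ and $k\ge 3$ be integers. Then: (a) $g_1(L_i,L_{i+2},L_{i+k})=(2L_i-1)L_{i+2}-L_i$ whenever $k\ge i+4$; (b) $g_1(L_i,L_{i+2},L_{2i+3})=(F_{i+3}-1)L_{i+2}-L_i$; (c) $g_1(L_i,L_{i+2},L_{2i+2})=(3F_{i-1}-1)L_{i+2}+L_{2i+2}-L_i$; (d) if $r=\lfloor (L_i-1)/F_k\rfloor\ge 1$ (equivalently $k\le i+1$), then $$g_1(L_i,L_{i+2},L_{i+k})=\begin{cases}(L_i-rF_k-1)L_{i+2}+(r+1)L_{i+k}-L_i & \text{if } (L_i-rF_k)L_{i+2}\ge F_{k-2}L_i,\\ (F_k-1)L_{i+2}+rL_{i+k}-L_i & \text{if } (L_i-rF_k)L_{i+2}< F_{k-2}L_i.\end{cases}$$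
   Context: Fibonacci numbers: $F_0=0$, $F_1=1$, $F_n=F_{n-1}+F_{n-2}$. Lucas numbers: $L_0=2$, $L_1=1$, $L_n=L_{n-1}+L_{n-2}$. For positive integers $a_1,\dots,a_l$ with $\gcd(a_1,\dots,a_l)=1$ and an integer $n$, let $d(n;a_1,\dots,a_l)$ be the number of tuples $(x_1,\dots,x_l)$ of nonnegative integers with $a_1x_1+\dots+a_lx_l=n$. For a nonnegative integer $p$, the $p$-Frobenius number $g_p(a_1,\dots,a_l)$ is the largest integer $n$ with $d(n;a_1,\dots,a_l)\le p$. *)

theory Defs
  imports "HOL-Number_Theory.Fib"
begin

fun lucas :: "nat \<Rightarrow> nat" where
  "lucas 0 = 2"
| "lucas (Suc 0) = 1"
| "lucas (Suc (Suc n)) = lucas (Suc n) + lucas n"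

definition num_reps :: "int \<Rightarrow> nat list \<Rightarrow> nat" where
  "num_reps n as = card {xs :: nat list. length xs = length as \<and>
      int (\<Sum>j<length as. as ! j * xs ! j) = n}"

definition frob_p :: "nat \<Rightarrow> nat list \<Rightarrow> int" where
  "frob_p p as = (GREATEST n :: int. num_reps n as \<le> p)"

end

theory Submission
  imports Defs "HOL-Number_Theory.Cong"
begin

text \<open>Write the generators as \<open>a\<close>, \<open>b\<close> and \<open>c = f b - e a\<close> with \<open>e \<ge> 0\<close>; for Lucas
  numbers this is \<open>L(i+k) = F(k) L(i+2) - F(k-2) L(i)\<close>. Since \<open>c \<equiv> f b (mod a)\<close>, an integer
  \<open>n \<equiv> w b (mod a)\<close> has a representation \<open>x a + y b + z c\<close> for every pair \<open>(y, z) \<ge> 0\<close>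
  with \<open>y + z f \<equiv> w (mod a)\<close> and \<open>y b + z c \<le> n\<close>. So if every residue class contains two
  such pairs of value at most \<open>M = y0 b + z0 c\<close>, every \<open>n > M - a\<close> has two representations;
  and if \<open>0 \<le> y0 + z0 f - a < min a f\<close>, \<open>y0 < f\<close> and \<open>e y0 \<le> c\<close>, then \<open>M - a\<close> has only
  its obvious representation. Each case of the theorem is a choice of \<open>(y0, z0)\<close>, namely
  \<open>(2a - 1, 0)\<close>, \<open>(f - 1, 0)\<close>, \<open>(2a - 1 - f, 1)\<close>, \<open>(a - rf - 1, r + 1)\<close> or \<open>(f - 1, r)\<close>,
  for which these conditions reduce to elementary inequalities; in cases (b) and (c) they are
  quadratic inequalities in \<open>F(i-3) \<le> F(i-2)\<close>.\<close>

lemma num_reps_triple: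
  "num_reps n [a, b, c] = card {(x, y, z). int (a * x + b * y + c * z) = n}"
proof -
  have "{xs. length xs = length [a, b, c] \<and> int (\<Sum>j<length [a, b, c]. [a, b, c] ! j * xs ! j) = n}
      = (\<lambda>(x, y, z). [x, y, z]) ` {(x, y, z). int (a * x + b * y + c * z) = n}"
    by (auto simp: length_Suc_conv numeral_3_eq_3 lessThan_Suc image_iff add.assoc)
  moreover have "inj (\<lambda>(x, y, z). [x :: nat, y, z])"
    by (auto intro: injI)
  ultimately show ?thesis
    unfolding num_reps_def by (simp add: card_image inj_on_subset)
qed

lemma finite_triple_reps:
  assumes "0 < a" "0 < b" "0 < c"
  shows "finite {(x, y, z). int (a * x + b * y + c * z) = n}"
proof -
  have "{(x, y, z). int (a * x + b * y + c * z) = n} \<subseteq> {..nat n} \<times> {..nat n} \<times> {..nat n}"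
  proof
    fix p assume "p \<in> {(x, y, z). int (a * x + b * y + c * z) = n}"
    then obtain x y z where p: "p = (x, y, z)" and n: "nat n = a * x + b * y + c * z"
      by (auto simp del: of_nat_add of_nat_mult)
    have "x \<le> a * x" "y \<le> b * y" "z \<le> c * z"
      using assms by simp_all
    then show "p \<in> {..nat n} \<times> {..nat n} \<times> {..nat n}"
      unfolding p n by (simp only: atMost_iff mem_Times_iff fst_conv snd_conv) linarith
  qed
  then show ?thesis
    by (rule finite_subset) simp
qed

lemma frob_p_eqI:
  assumes "num_reps G as \<le> p" and "\<And>n. G < n \<Longrightarrow> p < num_reps n as"
  shows "frob_p p as = G"
  unfolding frob_p_def
  by (rule Greatest_equality) (use assms in \<open>auto simp: not_le[symmetric]\<close>)

lemma two_le_num_repsI: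
  fixes a b c :: int
  assumes "0 < a" "0 < b" "0 < c"
    and "0 \<le> x1" "0 \<le> y1" "0 \<le> z1" "x1 * a + y1 * b + z1 * c = n"
    and "0 \<le> x2" "0 \<le> y2" "0 \<le> z2" "x2 * a + y2 * b + z2 * c = n"
    and "(x1, y1, z1) \<noteq> (x2, y2, z2)"
  shows "2 \<le> num_reps n [nat a, nat b, nat c]"
proof -
  let ?R = "{(x, y, z). int (nat a * x + nat b * y + nat c * z) = n}"
  have "(nat x1, nat y1, nat z1) \<in> ?R" "(nat x2, nat y2, nat z2) \<in> ?R"
    using assms by (auto simp: algebra_simps)
  moreover have "(nat x1, nat y1, nat z1) \<noteq> (nat x2, nat y2, nat z2)"
    using assms(4-6,8-10,12) by (auto simp: nat_eq_iff2)
  ultimately have "card {(nat x1, nat y1, nat z1), (nat x2, nat y2, nat z2)} \<le> card ?R"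
    by (intro card_mono finite_triple_reps) (use assms in auto)
  with \<open>(nat x1, nat y1, nat z1) \<noteq> _\<close> show ?thesis
    by (simp add: num_reps_triple)
qed

lemma num_reps_le_1I:
  fixes a b c :: int
  assumes "0 \<le> a" "0 \<le> b" "0 \<le> c"
    and "\<And>x y z. 0 \<le> x \<Longrightarrow> 0 \<le> y \<Longrightarrow> 0 \<le> z \<Longrightarrow> x * a + y * b + z * c = n
      \<Longrightarrow> (x, y, z) = p"
  shows "num_reps n [nat a, nat b, nat c] \<le> 1"
proof -
  let ?q = "(nat (fst p), nat (fst (snd p)), nat (snd (snd p)))"
  have rep_eq: "(x, y, z) = ?q" if "int (nat a * x + nat b * y + nat c * z) = n" for x y z
  proof -
    have "(int x, int y, int z) = p"
      by (rule assms(4)) (use that assms(1-3) in \<open>simp_all add: algebra_simps\<close>)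
    then show ?thesis by auto
  qed
  have "{(x, y, z). int (nat a * x + nat b * y + nat c * z) = n} \<subseteq> {?q}"
  proof
    fix t assume "t \<in> {(x, y, z). int (nat a * x + nat b * y + nat c * z) = n}"
    then obtain x y z where "t = (x, y, z)" "int (nat a * x + nat b * y + nat c * z) = n"
      by (auto simp del: of_nat_add of_nat_mult)
    with rep_eq show "t \<in> {?q}" by simp
  qed
  then show ?thesis
    unfolding num_reps_triple using card_mono[of "{?q}"] by fastforce
qed

definition class_pairs :: "int \<Rightarrow> int \<Rightarrow> int \<Rightarrow> int \<Rightarrow> int \<Rightarrow> int \<Rightarrow> (int \<times> int) set" where
  "class_pairs a f b c M w =
     {(y, z). 0 \<le> y \<and> 0 \<le> z \<and> a dvd y + z * f - w \<and> y * b + z * c \<le> M}"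

definition two_class_pairs :: "int \<Rightarrow> int \<Rightarrow> int \<Rightarrow> int \<Rightarrow> int \<Rightarrow> int \<Rightarrow> bool" where
  "two_class_pairs a f b c M w \<longleftrightarrow>
     (\<exists>p q. p \<noteq> q \<and> p \<in> class_pairs a f b c M w \<and> q \<in> class_pairs a f b c M w)"

lemma two_class_pairsI:
  "p \<in> class_pairs a f b c M w \<Longrightarrow> q \<in> class_pairs a f b c M w \<Longrightarrow> p \<noteq> q
    \<Longrightarrow> two_class_pairs a f b c M w"
  unfolding two_class_pairs_def by blast

lemma class_pairs_memI:
  assumes "c = f * b - e * a" "0 \<le> z" "z * f \<le> s" "a dvd s - w" "s * b - z * e * a \<le> M"
  shows "(s - z * f, z) \<in> class_pairs a f b c M w"
proof -
  have "(s - z * f) * b + z * c = s * b - z * e * a"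
    unfolding assms(1) by (simp add: algebra_simps)
  then show ?thesis
    using assms(2-5) unfolding class_pairs_def by simp
qed

lemma exists_residue_multiple:
  fixes a b n :: int
  assumes "0 < a" "coprime a b"
  shows "\<exists>w. 0 \<le> w \<and> w < a \<and> a dvd n - w * b"
proof -
  obtain x where x: "[b * x = 1] (mod a)"
    using cong_solve_coprime_int[of b a] assms(2) by (auto simp: coprime_commute)
  have "[(n * x) mod a * b = n * x * b] (mod a)"
    by (simp add: cong_def mod_mult_left_eq)
  also have "[n * x * b = n * 1] (mod a)"
    using cong_scalar_left[OF x, of n] by (simp add: ac_simps)
  finally have "a dvd n - (n * x) mod a * b"
    by (simp add: cong_iff_dvd_diff dvd_diff_commute)
  then show ?thesis
    using assms(1) by (intro exI[of _ "(n * x) mod a"]) simp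
qed

lemma class_pair_extends_to_rep:
  fixes a b c e f M n w :: int
  assumes "0 < a" "c = f * b - e * a" "(y, z) \<in> class_pairs a f b c M w"
    and "a dvd n - w * b" "M - a < n"
  shows "\<exists>x \<ge> 0. x * a + y * b + z * c = n"
proof -
  have yz: "a dvd y + z * f - w" "y * b + z * c \<le> M"
    using assms(3) unfolding class_pairs_def by auto
  have "n - (y * b + z * c) = (n - w * b) - (y + z * f - w) * b + z * e * a"
    unfolding assms(2) by (simp add: algebra_simps)
  also have "a dvd \<dots>"
    by (rule dvd_add[OF dvd_diff[OF assms(4) dvd_mult2[OF yz(1)]]]) simp
  finally obtain q where q: "n - (y * b + z * c) = a * q" ..
  with yz(2) assms(5) have "0 < a * (q + 1)"
    by (simp add: algebra_simps)
  then have "0 \<le> q"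
    using assms(1) zero_less_mult_pos by fastforce
  with q show ?thesis
    by (intro exI[of _ q]) (simp add: algebra_simps)
qed

lemma base_pair_of_small_value:
  fixes a b c e f y0 z0 y z t :: int
  assumes "0 < a" "0 < c" "0 \<le> e" "c = f * b - e * a"
    and "a \<le> y0 + z0 * f" "y0 + z0 * f < a + f" "y0 < f" "e * y0 \<le> c"
    and "0 \<le> y" "0 \<le> z" "0 \<le> t" "y + z * f + a = y0 + z0 * f + t * a"
    and "y * b + z * c \<le> y0 * b + z0 * c - a"
  shows "t = 0 \<and> z = 0"
proof -
  have f: "0 < f"
    using assms(5,6) by linarith
  have y: "y = y0 + z0 * f + (t - 1) * a - z * f"
    using assms(12) by (simp add: algebra_simps)
  with assms(9) have zf: "z * f \<le> y0 + z0 * f + (t - 1) * a"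
    by simp
  have "a * ((t - 1) * b + 1) \<le> a * ((z - z0) * e)"
    using assms(13) unfolding y assms(4) by (simp add: algebra_simps)
  then have key: "(t - 1) * b + 1 \<le> (z - z0) * e"
    using assms(1) by simp
  consider "t = 0" | "t = 1" | "2 \<le> t"
    using assms(11) by linarith
  then show ?thesis
  proof cases
    case 1
    then have "z * f < 1 * f"
      using zf assms(6) by simp
    then show ?thesis
      using 1 f assms(10) by (simp add: mult_less_cancel_right)
  next
    case 2
    with key have "0 < (z - z0) * e"
      by simp
    then have "(z0 + 1) * f \<le> z * f"
      using assms(3) f by (intro mult_right_mono) (auto simp: zero_less_mult_iff)
    then show ?thesis
      using zf 2 assms(7) by (simp add: algebra_simps)
  next
    case 3
    have "f * ((t - 1) * b + 1) \<le> f * ((z - z0) * e)"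
      using key f by (intro mult_left_mono) auto
    moreover have "e * (z * f) \<le> e * (y0 + z0 * f + (t - 1) * a)"
      using zf assms(3) by (rule mult_left_mono)
    ultimately have "(t - 1) * c + f \<le> e * y0"
      unfolding assms(4) by (simp add: algebra_simps)
    moreover have "c \<le> (t - 1) * c"
      using 3 assms(2) by simp
    ultimately show ?thesis
      using f assms(8) by linarith
  qed
qed

lemma rep_of_frobenius_value_unique:
  fixes a b c e f y0 z0 x y z :: int
  assumes "0 < a" "0 < c" "0 \<le> e" "coprime a b" "c = f * b - e * a"
    and "a \<le> y0 + z0 * f" "y0 + z0 * f < a + f" "y0 + z0 * f < 2 * a" "y0 < f" "e * y0 \<le> c"
    and "0 \<le> x" "0 \<le> y" "0 \<le> z" "x * a + y * b + z * c = y0 * b + z0 * c - a"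
  shows "(x, y, z) = (b - z0 * e - 1, y0 + z0 * f - a, 0)"
proof -
  have "(y0 + z0 * f - (y + z * f)) * b = a * (x - z * e + z0 * e + 1)"
    using assms(14) unfolding assms(5) by (simp add: algebra_simps)
  then have "a dvd (y0 + z0 * f - (y + z * f)) * b"
    by simp
  then obtain t' where t': "y0 + z0 * f - (y + z * f) = a * t'"
    using assms(4) by (auto simp: coprime_dvd_mult_left_iff)
  have "0 \<le> z * f"
    using assms(6,7,13) by simp
  then have "0 < a * (2 - t')"
    using t' assms(8,12) by (simp add: algebra_simps)
  then have "0 \<le> 1 - t'"
    using assms(1) zero_less_mult_pos by fastforce
  moreover have "y + z * f + a = y0 + z0 * f + (1 - t') * a"
    using t' by (simp add: algebra_simps)
  moreover have "y * b + z * c \<le> y0 * b + z0 * c - a"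
    using assms(14) mult_nonneg_nonneg[OF assms(11) less_imp_le[OF assms(1)]] by linarith
  ultimately have "1 - t' = 0" and z: "z = 0"
    using base_pair_of_small_value[OF assms(1-3,5-7,9,10,12,13)] by blast+
  then have y: "y = y0 + z0 * f - a"
    using t' by simp
  have "x * a = (b - z0 * e - 1) * a"
    using assms(14) unfolding y z assms(5) by (simp add: algebra_simps)
  then show ?thesis
    using y z assms(1) by simp
qed

theorem frob_1_eq_via_class_pairs:
  fixes a b c e f y0 z0 :: int
  assumes pos: "0 < a" "0 < b" "0 < c" and "0 \<le> e" and cop: "coprime a b"
    and c: "c = f * b - e * a"
    and "a \<le> y0 + z0 * f" "y0 + z0 * f < a + f" "y0 + z0 * f < 2 * a" "y0 < f" "e * y0 \<le> c"
    and cover: "\<And>w. 0 \<le> w \<Longrightarrow> w < a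
      \<Longrightarrow> two_class_pairs a f b c (y0 * b + z0 * c) w"
  shows "frob_p 1 [nat a, nat b, nat c] = y0 * b + z0 * c - a"
proof (rule frob_p_eqI)
  show "num_reps (y0 * b + z0 * c - a) [nat a, nat b, nat c] \<le> 1"
    using pos rep_of_frobenius_value_unique[OF pos(1,3) assms(4) cop c assms(7-11)]
    by (intro num_reps_le_1I) auto
next
  fix n assume n: "y0 * b + z0 * c - a < n"
  obtain w where w: "0 \<le> w" "w < a" "a dvd n - w * b"
    using exists_residue_multiple[OF pos(1) cop] by blast
  obtain y1 z1 y2 z2 where
    yz: "(y1, z1) \<in> class_pairs a f b c (y0 * b + z0 * c) w"
        "(y2, z2) \<in> class_pairs a f b c (y0 * b + z0 * c) w" "(y1, z1) \<noteq> (y2, z2)"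
    using cover[OF w(1,2)] unfolding two_class_pairs_def by auto
  obtain x1 x2 where
    x: "0 \<le> x1" "x1 * a + y1 * b + z1 * c = n" "0 \<le> x2" "x2 * a + y2 * b + z2 * c = n"
    using class_pair_extends_to_rep[OF pos(1) c yz(1) w(3) n]
      class_pair_extends_to_rep[OF pos(1) c yz(2) w(3) n] by blast
  have yz_nonneg: "0 \<le> y1" "0 \<le> z1" "0 \<le> y2" "0 \<le> z2"
    using yz(1,2) unfolding class_pairs_def by auto
  have "2 \<le> num_reps n [nat a, nat b, nat c]"
    using two_le_num_repsI[OF pos x(1) yz_nonneg(1,2) x(2,3) yz_nonneg(3,4) x(4)] yz(3)
    by simp
  then show "1 < num_reps n [nat a, nat b, nat c]"
    by simp
qed

lemma two_class_pairs_of_wide_bound: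
  assumes "0 < b" "(2 * a - 1) * b \<le> M" "0 \<le> w" "w < a"
  shows "two_class_pairs a f b c M w"
proof -
  have "w * b \<le> (2 * a - 1) * b" "(w + a) * b \<le> (2 * a - 1) * b"
    using assms by (intro mult_right_mono; linarith)+
  with assms(2) have "w * b \<le> M" "(w + a) * b \<le> M"
    by linarith+
  then have "(w, 0) \<in> class_pairs a f b c M w" "(w + a, 0) \<in> class_pairs a f b c M w"
    using assms(3,4) unfolding class_pairs_def by auto
  moreover have "(w, 0) \<noteq> (w + a, 0)"
    using assms(3,4) by simp
  ultimately show ?thesis
    by (blast intro: two_class_pairsI)
qed

lemma two_class_pairs_of_large_f:
  assumes c: "c = f * b - e * a" and "0 < b" "a < f"
    and "(f - 1) * b \<le> M" "(2 * a - 1) * b - e * a \<le> M"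
    and "0 \<le> w" "w < a"
  shows "two_class_pairs a f b c M w"
proof -
  have "w * b \<le> (f - 1) * b"
    using assms by (intro mult_right_mono; linarith)
  with assms(4) have "w * b \<le> M"
    by linarith
  then have base: "(w, 0) \<in> class_pairs a f b c M w"
    using assms(6) unfolding class_pairs_def by auto
  show ?thesis
  proof (cases "w + a < f")
    case True
    then have "(w + a) * b \<le> (f - 1) * b"
      using assms by (intro mult_right_mono; linarith)
    with assms(4) have "(w + a) * b \<le> M"
      by linarith
    then have "(w + a, 0) \<in> class_pairs a f b c M w"
      using assms(6,7) unfolding class_pairs_def by auto
    moreover have "(w, 0) \<noteq> (w + a, 0)"
      using assms(6,7) by simp
    ultimately show ?thesis
      using base by (blast intro: two_class_pairsI)
  next
    case False
    have "(w + a) * b \<le> (2 * a - 1) * b"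
      using assms by (intro mult_right_mono; linarith)
    with assms(5) have "(w + a) * b - 1 * e * a \<le> M"
      by linarith
    with False have "(w + a - 1 * f, 1) \<in> class_pairs a f b c M w"
      by (intro class_pairs_memI[OF c]) auto
    with base show ?thesis
      by (rule two_class_pairsI) simp
  qed
qed

lemma two_class_pairs_below_f:
  assumes c: "c = f * b - e * a" and "0 < a" "0 < b" "0 < c" "0 \<le> r" "r * f \<le> a"
    and M1: "(a - r * f - 1) * b + (r + 1) * c \<le> M" and M2: "(f - 1) * b + r * c \<le> M"
    and "0 \<le> w" "w < f"
  shows "two_class_pairs a f b c M w"
proof -
  have "w * b \<le> (f - 1) * b"
    using assms by (intro mult_right_mono; linarith)
  moreover have "0 \<le> r * c"
    using assms by simp
  ultimately have "w * b \<le> M"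
    using M2 by linarith
  then have base: "(w, 0) \<in> class_pairs a f b c M w"
    using assms(9) unfolding class_pairs_def by auto
  show ?thesis
  proof (cases "w + a < (r + 1) * f")
    case True
    have "(w + a) * b - r * e * a \<le> ((r + 1) * f - 1) * b - r * e * a"
      using True assms by (simp add: mult_right_mono)
    also have "\<dots> = (f - 1) * b + r * c"
      unfolding c by (simp add: algebra_simps)
    finally have "(w + a - r * f, r) \<in> class_pairs a f b c M w"
      using assms(5,6,9) M2 by (intro class_pairs_memI[OF c]) auto
    moreover have "(w, 0) \<noteq> (w + a - r * f, r)"
      using assms(2) by auto
    ultimately show ?thesis
      using base by (blast intro: two_class_pairsI)
  next
    case False
    have "(w + a) * b - (r + 1) * e * a \<le> (f - 1 + a) * b - (r + 1) * e * a"
      using assms by (simp add: mult_right_mono)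
    also have "\<dots> = (a - r * f - 1) * b + (r + 1) * c"
      unfolding c by (simp add: algebra_simps)
    finally have "(w + a - (r + 1) * f, r + 1) \<in> class_pairs a f b c M w"
      using False assms(5) M1 by (intro class_pairs_memI[OF c]) auto
    moreover have "(w, 0) \<noteq> (w + a - (r + 1) * f, r + 1)"
      using assms(5) by simp
    ultimately show ?thesis
      using base by (blast intro: two_class_pairsI)
  qed
qed

lemma two_class_pairs_above_f:
  assumes c: "c = f * b - e * a" and "0 < a" "0 < b" "0 \<le> e" "0 < f" "2 * e * a \<le> f * b"
    and "a - 1 < (r + 1) * f"
    and M1: "(a - r * f - 1) * b + (r + 1) * c \<le> M" and M2: "(f - 1) * b + r * c \<le> M"
    and "f \<le> w" "w < a"
  shows "two_class_pairs a f b c M w"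
proof -
  define q where "q = w div f"
  have "w = q * f + w mod f" "0 \<le> w mod f" "w mod f < f"
    unfolding q_def using assms(5) by simp_all
  then have q: "q * f \<le> w" "w < (q + 1) * f"
    by (simp_all only: distrib_right mult_1_left)
  have "1 * f < (q + 1) * f"
    using q(2) assms(10) by simp
  then have "1 \<le> q"
    using mult_right_less_imp_less assms(5) by fastforce
  have "q * f < (r + 1) * f"
    using q(1) assms(7,11) by simp
  then have "q \<le> r"
    using mult_right_less_imp_less assms(5) by fastforce
  have ea: "0 \<le> e * a" "e * a \<le> c"
    using assms(2,4,6) unfolding c by (simp_all add: ac_simps)
  have bound: "w * b - (q - 1) * e * a \<le> M"
  proof (cases "q < r")
    case True
    have "w * b \<le> ((q + 1) * f - 1) * b"
      using q(2) assms(3) by (intro mult_right_mono) auto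
    moreover have "((q + 1) * f - 1) * b - (q - 1) * e * a = (f - 1) * b + q * c + e * a"
      unfolding c by (simp add: algebra_simps)
    moreover have "(q + 1) * c \<le> r * c"
      using True ea by (intro mult_right_mono) auto
    ultimately show ?thesis
      using M2 ea by (simp add: algebra_simps)
  next
    case False
    with \<open>q \<le> r\<close> have "q = r"
      by simp
    have "w * b \<le> (a - 1) * b"
      using assms(3,11) by (intro mult_right_mono) auto
    moreover have
      "(a - r * f - 1) * b + (r + 1) * c = (a - 1) * b - (r - 1) * e * a + (f * b - 2 * e * a)"
      unfolding c by (simp add: algebra_simps)
    ultimately show ?thesis
      using M1 assms(6) unfolding \<open>q = r\<close> by linarith
  qed
  have "(w - q * f, q) \<in> class_pairs a f b c M w"
    using \<open>1 \<le> q\<close> q(1) bound ea(1)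
    by (intro class_pairs_memI[OF c]) (auto simp: algebra_simps)
  moreover have "(w - (q - 1) * f, q - 1) \<in> class_pairs a f b c M w"
    using \<open>1 \<le> q\<close> q(1) bound assms(5)
    by (intro class_pairs_memI[OF c]) (auto simp: algebra_simps)
  moreover have "(w - q * f, q) \<noteq> (w - (q - 1) * f, q - 1)"
    by simp
  ultimately show ?thesis
    by (blast intro: two_class_pairsI)
qed

lemma two_class_pairs_of_small_f:
  assumes c: "c = f * b - e * a" and "0 < a" "0 < b" "0 < c" "0 \<le> e" "0 < f"
    and "2 * e * a \<le> f * b" and "0 \<le> r" "r * f \<le> a" "a - 1 < (r + 1) * f"
    and "(a - r * f - 1) * b + (r + 1) * c \<le> M" "(f - 1) * b + r * c \<le> M"
    and "0 \<le> w" "w < a"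
  shows "two_class_pairs a f b c M w"
proof (cases "w < f")
  case True
  then show ?thesis
    using two_class_pairs_below_f[OF c] assms by blast
next
  case False
  then show ?thesis
    using two_class_pairs_above_f[OF c] assms by simp
qed

theorem frob_1_of_wide_f:
  fixes a b c e f :: int
  assumes pos: "0 < a" "0 < b" "0 < c" and "0 \<le> e" "coprime a b" and c: "c = f * b - e * a"
    and "2 * a \<le> f" "e * (2 * a - 1) \<le> c"
  shows "frob_p 1 [nat a, nat b, nat c] = (2 * a - 1) * b - a"
proof -
  have "frob_p 1 [nat a, nat b, nat c] = (2 * a - 1) * b + 0 * c - a"
  proof (rule frob_1_eq_via_class_pairs[OF pos assms(4,5) c])
    fix w assume "0 \<le> w" "w < a"
    then show "two_class_pairs a f b c ((2 * a - 1) * b + 0 * c) w"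
      using two_class_pairs_of_wide_bound[OF pos(2)] by simp
  qed (use pos(1) assms(7,8) in auto)
  then show ?thesis
    by simp
qed

theorem frob_1_of_large_f_low:
  fixes a b c e f :: int
  assumes pos: "0 < a" "0 < b" "0 < c" and "0 \<le> e" "coprime a b" and c: "c = f * b - e * a"
    and "a < f" "f \<le> 2 * a" "e * (f - 1) \<le> c" "(2 * a - f) * b \<le> e * a"
  shows "frob_p 1 [nat a, nat b, nat c] = (f - 1) * b - a"
proof -
  have "frob_p 1 [nat a, nat b, nat c] = (f - 1) * b + 0 * c - a"
  proof (rule frob_1_eq_via_class_pairs[OF pos assms(4,5) c])
    have "(2 * a - 1) * b - e * a \<le> (f - 1) * b"
      using assms(10) by (simp add: algebra_simps)
    moreover fix w assume "0 \<le> w" "w < a"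
    ultimately show "two_class_pairs a f b c ((f - 1) * b + 0 * c) w"
      using two_class_pairs_of_large_f[OF c pos(2) assms(7)] by simp
  qed (use assms(7-9) in auto)
  then show ?thesis
    by simp
qed

theorem frob_1_of_large_f_high:
  fixes a b c e f :: int
  assumes pos: "0 < a" "0 < b" "0 < c" and "0 \<le> e" "coprime a b" and c: "c = f * b - e * a"
    and "a < f" "e * (f - 1) \<le> c" "e * a \<le> (2 * a - f) * b"
  shows "frob_p 1 [nat a, nat b, nat c] = (2 * a - 1 - f) * b + c - a"
proof -
  have M: "(2 * a - 1 - f) * b + 1 * c = (2 * a - 1) * b - e * a"
    unfolding c by (simp add: algebra_simps)
  have "frob_p 1 [nat a, nat b, nat c] = (2 * a - 1 - f) * b + 1 * c - a"
  proof (rule frob_1_eq_via_class_pairs[OF pos assms(4,5) c])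
    have "e * (2 * a - 1 - f) \<le> e * (f - 1)"
      using assms(4,7) by (intro mult_left_mono) auto
    then show "e * (2 * a - 1 - f) \<le> c"
      using assms(8) by linarith
    have "(f - 1) * b \<le> (2 * a - 1) * b - e * a"
      using assms(9) by (simp add: algebra_simps)
    moreover fix w assume "0 \<le> w" "w < a"
    ultimately show "two_class_pairs a f b c ((2 * a - 1 - f) * b + 1 * c) w"
      unfolding M using two_class_pairs_of_large_f[OF c pos(2) assms(7)] by simp
  qed (use pos(1) assms(7) in auto)
  then show ?thesis
    by simp
qed

theorem frob_1_of_small_f:
  fixes a b c e f r :: int
  assumes pos: "0 < a" "0 < b" "0 < c" and "0 \<le> e" "coprime a b" and c: "c = f * b - e * a"
    and "0 < f" "1 \<le> r" "r * f \<le> a - 1" "a - 1 < (r + 1) * f"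
    and "2 * e * a \<le> f * b" "e * (f - 1) \<le> c"
  shows "frob_p 1 [nat a, nat b, nat c] =
    (if e * a \<le> (a - r * f) * b then (a - r * f - 1) * b + (r + 1) * c - a
     else (f - 1) * b + r * c - a)"
proof -
  have M1_M2: "(a - r * f - 1) * b + (r + 1) * c - ((f - 1) * b + r * c) = (a - r * f) * b - e * a"
    unfolding c by (simp add: algebra_simps)
  have "f \<le> r * f"
    using assms(7,8) by simp
  with assms(9) have "f \<le> a - 1"
    by linarith
  note cover = two_class_pairs_of_small_f[OF c pos assms(4,7,11), of r]
  show ?thesis
  proof (cases "e * a \<le> (a - r * f) * b")
    case True
    have "frob_p 1 [nat a, nat b, nat c] = (a - r * f - 1) * b + (r + 1) * c - a"
    proof (rule frob_1_eq_via_class_pairs[OF pos assms(4,5) c])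
      have "e * (a - r * f - 1) \<le> e * (f - 1)"
        using assms(4,10) by (intro mult_left_mono) (auto simp: algebra_simps)
      then show "e * (a - r * f - 1) \<le> c"
        using assms(12) by linarith
      show "two_class_pairs a f b c ((a - r * f - 1) * b + (r + 1) * c) w"
        if "0 \<le> w" "w < a" for w
        using cover that True M1_M2 assms(8-10) by simp
    qed (use \<open>f \<le> a - 1\<close> assms(9,10) in \<open>auto simp: algebra_simps\<close>)
    with True show ?thesis
      by simp
  next
    case False
    have "(r + 1) * f \<noteq> a"
    proof
      assume "(r + 1) * f = a"
      then have "a - r * f = f"
        by (simp add: algebra_simps)
      moreover have "0 \<le> e * a"
        using assms(4) pos(1) by simp
      ultimately show False
        using False assms(11) by (simp add: mult.commute mult.left_commute)
    qed
    have "frob_p 1 [nat a, nat b, nat c] = (f - 1) * b + r * c - a"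
    proof (rule frob_1_eq_via_class_pairs[OF pos assms(4,5) c])
      show "e * (f - 1) \<le> c"
        by (rule assms(12))
      show "two_class_pairs a f b c ((f - 1) * b + r * c) w"
        if "0 \<le> w" "w < a" for w
        using cover that False M1_M2 assms(8-10) by simp
    qed (use \<open>(r + 1) * f \<noteq> a\<close> \<open>f \<le> a - 1\<close> assms(9,10)
      in \<open>auto simp: algebra_simps\<close>)
    with False show ?thesis
      by simp
  qed
qed

lemma lucas_add_fib: "lucas (n + Suc k) = fib (Suc k) * lucas (Suc n) + fib k * lucas n"
proof (induction k rule: fib.induct)
  case (3 k)
  have "lucas (n + Suc (Suc (Suc k))) = lucas (n + Suc (Suc k)) + lucas (n + Suc k)"
    by (simp add: add.commute)
  also have "\<dots> = fib (Suc (Suc (Suc k))) * lucas (Suc n) + fib (Suc (Suc k)) * lucas n"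
    using 3 by (simp add: algebra_simps)
  finally show ?case .
qed simp_all

lemma lucas_add_eq_diff:
  assumes "2 \<le> k"
  shows "int (lucas (n + k)) = int (fib k) * int (lucas (n + 2)) - int (fib (k - 2)) * int (lucas n)"
proof -
  obtain j where k: "k = Suc (Suc j)"
    using assms by (metis add_2_eq_Suc le_Suc_ex)
  have "lucas (n + k) = fib k * lucas (Suc n) + fib (Suc j) * lucas n"
    using lucas_add_fib[of n "Suc j"] k by simp
  moreover have "lucas (n + 2) = lucas (Suc n) + lucas n"
    by (simp add: numeral_2_eq_2)
  ultimately show ?thesis
    using k by (simp add: algebra_simps)
qed

lemma lucas_pos: "0 < lucas n"
  by (induction n rule: fib.induct) auto

lemma lucas_Suc_mono: "1 \<le> n \<Longrightarrow> lucas n \<le> lucas (Suc n)"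
  by (cases n rule: fib.cases) auto

lemma two_lucas_le_lucas_add_2: "1 \<le> n \<Longrightarrow> 2 * lucas n \<le> lucas (n + 2)"
  using lucas_Suc_mono[of n] by (simp add: numeral_2_eq_2)

lemma lucas_le_fib_add_2: "1 \<le> n \<Longrightarrow> lucas n \<le> fib (n + 2)"
  using lucas_add_fib[of 0 "n - 1"] fib_Suc_mono[of "n - 1"]
  by (cases n) (simp_all add: numeral_2_eq_2)

lemma two_fib_diff_2_le: "2 \<le> k \<Longrightarrow> 2 * fib (k - 2) \<le> fib k"
  using fib_Suc_mono[of "k - 2"] fib_plus_2[of "k - 2"] by (simp add: Suc_diff_Suc numeral_2_eq_2)

lemma coprime_lucas_Suc: "coprime (lucas n) (lucas (Suc n))"
proof (induction n)
  case (Suc n)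
  then show ?case
    by (simp add: coprime_iff_gcd_eq_1 gcd.commute)
qed simp

lemma coprime_lucas_add_2: "coprime (lucas n) (lucas (n + 2))"
  using coprime_lucas_Suc[of n]
  by (simp add: numeral_2_eq_2 coprime_iff_gcd_eq_1 add.commute[of "lucas (Suc n)"])

theorem frob_1_lucas_large_k:
  assumes "1 \<le> i" "i + 4 \<le> k"
  shows "frob_p 1 [lucas i, lucas (i + 2), lucas (i + k)]
    = (2 * int (lucas i) - 1) * int (lucas (i + 2)) - int (lucas i)"
proof -
  define a where "a = int (lucas i)"
  define b where "b = int (lucas (i + 2))"
  define c where "c = int (lucas (i + k))"
  define e where "e = int (fib (k - 2))"
  define f where "f = int (fib k)"
  note defs = a_def b_def c_def e_def f_def
  have c: "c = f * b - e * a"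
    using lucas_add_eq_diff[of k i] assms(2) unfolding defs by simp
  have pos: "0 < a" "0 < b" "0 < c"
    unfolding defs by (simp_all only: of_nat_0_less_iff lucas_pos)
  have "2 * a \<le> b" "2 * e \<le> f"
    using two_lucas_le_lucas_add_2[OF assms(1)] two_fib_diff_2_le[of k] assms(2)
    unfolding defs by simp_all
  then have "(2 * e) * (2 * a) \<le> f * b"
    using pos unfolding defs by (intro mult_mono) simp_all
  then have "e * (2 * a - 1) \<le> c"
    using pos unfolding c e_def by (simp add: algebra_simps)
  moreover have "2 * lucas i \<le> fib k"
    using lucas_le_fib_add_2[OF assms(1)] two_fib_diff_2_le[of "i + 4"] fib_mono[OF assms(2)]
    by simp
  then have "2 * a \<le> f"
    unfolding defs by simp
  moreover have "coprime a b"
    unfolding defs by (simp only: coprime_int_iff coprime_lucas_add_2)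
  ultimately have "frob_p 1 [nat a, nat b, nat c] = (2 * a - 1) * b - a"
    using frob_1_of_wide_f[OF pos _ _ c] unfolding e_def by simp
  then show ?thesis
    unfolding defs nat_int .
qed

theorem frob_1_lucas_small_k:
  assumes "1 \<le> i" "2 \<le> k" and r: "r = (lucas i - 1) div fib k" "1 \<le> r"
  shows "frob_p 1 [lucas i, lucas (i + 2), lucas (i + k)] =
    (if int (fib (k - 2)) * int (lucas i) \<le> (int (lucas i) - int r * int (fib k)) * int (lucas (i + 2))
     then (int (lucas i) - int r * int (fib k) - 1) * int (lucas (i + 2)) + (int r + 1) * int (lucas (i + k))
       - int (lucas i)
     else (int (fib k) - 1) * int (lucas (i + 2)) + int r * int (lucas (i + k)) - int (lucas i))"
proof -
  define a where "a = int (lucas i)"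
  define b where "b = int (lucas (i + 2))"
  define c where "c = int (lucas (i + k))"
  define e where "e = int (fib (k - 2))"
  define f where "f = int (fib k)"
  note defs = a_def b_def c_def e_def f_def
  have c: "c = f * b - e * a"
    using lucas_add_eq_diff[of k i] assms(2) unfolding defs by simp
  have pos: "0 < a" "0 < b" "0 < c"
    unfolding defs by (simp_all only: of_nat_0_less_iff lucas_pos)
  have "0 < fib k"
    using assms(2) by (simp add: fib_neq_0_nat)
  then have f: "0 < f"
    unfolding f_def by simp
  from \<open>0 < fib k\<close> have "r * fib k \<le> lucas i - 1" "lucas i - 1 < fib k + r * fib k"
    unfolding r by (simp_all add: div_times_less_eq_dividend dividend_less_div_times)
  then have rf: "int r * f \<le> a - 1" "a - 1 < (int r + 1) * f"
    using pos(1) unfolding a_def f_def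
    by (simp_all add: of_nat_diff algebra_simps flip: of_nat_mult)
  have "2 * a \<le> b" "2 * e \<le> f"
    using two_lucas_le_lucas_add_2[OF assms(1)] two_fib_diff_2_le[OF assms(2)]
    unfolding defs by simp_all
  moreover have "0 \<le> e"
    unfolding e_def by simp
  ultimately have ea: "2 * e * a \<le> f * b" "2 * e * a \<le> f * a" "f * (2 * a) \<le> f * b"
    using pos f by (auto intro: mult_mono mult_right_mono mult_left_mono)
  have "1 * f \<le> int r * f"
    using r(2) f by (intro mult_right_mono) simp_all
  with rf(1) have "f \<le> a - 1"
    by simp
  then have "e * (f - 1 + a) \<le> e * (2 * a)"
    using \<open>0 \<le> e\<close> by (intro mult_left_mono) simp_all
  moreover have "0 \<le> f * a"
    using f pos(1) by simp
  ultimately have "e * (f - 1) \<le> c"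
    using ea unfolding c by (simp add: algebra_simps)
  moreover have "coprime a b"
    unfolding defs by (simp only: coprime_int_iff coprime_lucas_add_2)
  ultimately have "frob_p 1 [nat a, nat b, nat c] =
    (if e * a \<le> (a - int r * f) * b then (a - int r * f - 1) * b + (int r + 1) * c - a
     else (f - 1) * b + int r * c - a)"
    using frob_1_of_small_f[OF pos \<open>0 \<le> e\<close> _ c f _ rf ea(1)] r(2) by simp
  then show ?thesis
    unfolding defs nat_int .
qed

lemma lucas_fib_coordinates:
  fixes m :: nat
  defines "u \<equiv> int (fib m)" and "v \<equiv> int (fib (Suc m))"
  shows "int (lucas (m + 3)) = 3 * u + 4 * v" and "int (lucas (m + 5)) = 7 * u + 11 * v"
    and "int (fib (m + 2)) = u + v" and "int (fib (m + 3)) = u + 2 * v"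
    and "int (fib (m + 4)) = 2 * u + 3 * v" and "int (fib (m + 5)) = 3 * u + 5 * v"
    and "int (fib (m + 6)) = 5 * u + 8 * v"
  using lucas_add_fib[of 2 m] lucas_add_fib[of 4 m]
  by (simp_all add: u_def v_def eval_nat_numeral)

theorem frob_1_lucas_2i3:
  assumes "3 \<le> i"
  shows "frob_p 1 [lucas i, lucas (i + 2), lucas (2 * i + 3)]
    = (int (fib (i + 3)) - 1) * int (lucas (i + 2)) - int (lucas i)"
proof -
  obtain m where i: "i = m + 3"
    using assms by (metis add.commute le_iff_add)
  then have idx: "i + 1 = m + 4" "i + 2 = m + 5" "i + 3 = m + 6"
    by simp_all
  define u where "u = int (fib m)"
  define v where "v = int (fib (Suc m))"
  define a where "a = int (lucas i)"
  define b where "b = int (lucas (i + 2))"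
  define c where "c = int (lucas (2 * i + 3))"
  define e where "e = int (fib (i + 1))"
  define f where "f = int (fib (i + 3))"
  note defs = a_def b_def c_def e_def f_def
  have "int (lucas (i + (i + 3))) = f * b - e * a"
    using lucas_add_eq_diff[of "i + 3" i] unfolding defs by simp
  moreover have "i + (i + 3) = 2 * i + 3"
    by simp
  ultimately have c: "c = f * b - e * a"
    unfolding c_def by metis
  have pos: "0 < a" "0 < b" "0 < c"
    unfolding defs by (simp_all only: of_nat_0_less_iff lucas_pos)
  have coords: "a = 3 * u + 4 * v" "b = 7 * u + 11 * v" "e = 2 * u + 3 * v" "f = 5 * u + 8 * v"
    using lucas_fib_coordinates[of m] unfolding defs u_def v_def idx unfolding i by simp_all
  have uv: "0 \<le> u" "u \<le> v" "1 \<le> v"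
    unfolding u_def v_def using fib_Suc_mono[of m] fib_neq_0_nat[of "Suc m"] by simp_all
  then have uv2: "0 \<le> u * u" "0 \<le> u * v" "u * u \<le> u * v" "0 \<le> v * v"
    by (simp_all add: mult_left_mono)
  have e: "0 \<le> e"
    unfolding e_def by simp
  have "f * b - e * a - e * (f - 1) = 19 * (u * u) + 63 * (u * v) + 52 * (v * v) + e"
    unfolding coords by algebra
  then have "e * (f - 1) \<le> c"
    using uv2 e unfolding c by linarith
  moreover have "e * a - (2 * a - f) * b = (u * v - u * u) + 5 * (u * v) + 12 * (v * v)"
    unfolding coords by algebra
  then have "(2 * a - f) * b \<le> e * a"
    using uv2 by linarith
  moreover have "a < f" "f \<le> 2 * a"
    using uv unfolding coords by simp_all
  moreover have "coprime a b"
    unfolding defs by (simp only: coprime_int_iff coprime_lucas_add_2)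
  ultimately have "frob_p 1 [nat a, nat b, nat c] = (f - 1) * b - a"
    using frob_1_of_large_f_low[OF pos e _ c] by simp
  then show ?thesis
    unfolding defs nat_int .
qed

theorem frob_1_lucas_2i2:
  assumes "3 \<le> i"
  shows "frob_p 1 [lucas i, lucas (i + 2), lucas (2 * i + 2)]
    = (3 * int (fib (i - 1)) - 1) * int (lucas (i + 2)) + int (lucas (2 * i + 2)) - int (lucas i)"
proof -
  obtain m where i: "i = m + 3"
    using assms by (metis add.commute le_iff_add)
  then have idx: "i - 1 = m + 2" "i + 2 = m + 5"
    by simp_all
  define u where "u = int (fib m)"
  define v where "v = int (fib (Suc m))"
  define a where "a = int (lucas i)"
  define b where "b = int (lucas (i + 2))"
  define c where "c = int (lucas (2 * i + 2))"
  define e where "e = int (fib i)"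
  define f where "f = int (fib (i + 2))"
  note defs = a_def b_def c_def e_def f_def
  have "int (lucas (i + (i + 2))) = f * b - e * a"
    using lucas_add_eq_diff[of "i + 2" i] unfolding defs by simp
  moreover have "i + (i + 2) = 2 * i + 2"
    by simp
  ultimately have c: "c = f * b - e * a"
    unfolding c_def by metis
  have pos: "0 < a" "0 < b" "0 < c"
    unfolding defs by (simp_all only: of_nat_0_less_iff lucas_pos)
  have coords: "a = 3 * u + 4 * v" "b = 7 * u + 11 * v" "e = u + 2 * v" "f = 3 * u + 5 * v"
    and fib_pred: "int (fib (i - 1)) = u + v"
    using lucas_fib_coordinates[of m] unfolding defs u_def v_def idx unfolding i by simp_all
  have uv: "0 \<le> u" "1 \<le> v"
    unfolding u_def v_def using fib_neq_0_nat[of "Suc m"] by simp_all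
  then have uv2: "0 \<le> u * u" "0 \<le> u * v" "0 \<le> v * v"
    by simp_all
  have e: "0 \<le> e"
    unfolding e_def by simp
  have "f * b - e * a - e * (f - 1) = 15 * (u * u) + 47 * (u * v) + 37 * (v * v) + e"
    unfolding coords by algebra
  then have "e * (f - 1) \<le> c"
    using uv2 e unfolding c by linarith
  moreover have "(2 * a - f) * b - e * a = 18 * (u * u) + 44 * (u * v) + 25 * (v * v)"
    unfolding coords by algebra
  then have "e * a \<le> (2 * a - f) * b"
    using uv2 by linarith
  moreover have "a < f"
    using uv unfolding coords by simp
  moreover have "coprime a b"
    unfolding defs by (simp only: coprime_int_iff coprime_lucas_add_2)
  ultimately have "frob_p 1 [nat a, nat b, nat c] = (2 * a - 1 - f) * b + c - a"
    using frob_1_of_large_f_high[OF pos e _ c] by simp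
  moreover have "2 * a - 1 - f = 3 * int (fib (i - 1)) - 1"
    unfolding fib_pred coords by simp
  ultimately show ?thesis
    unfolding defs nat_int by simp
qed

theorem theorem6:
  fixes i k :: nat
  assumes hi: "i \<ge> 3" and hk: "k \<ge> 3"
  defines "Li \<equiv> int (lucas i)" and "Li2 \<equiv> int (lucas (i + 2))"
      and "Lik \<equiv> int (lucas (i + k))"
  shows
   "(k \<ge> i + 4 \<longrightarrow>
       frob_p 1 [lucas i, lucas (i + 2), lucas (i + k)] = (2 * Li - 1) * Li2 - Li)
    \<and> frob_p 1 [lucas i, lucas (i + 2), lucas (2 * i + 3)]
        = (int (fib (i + 3)) - 1) * Li2 - Li
    \<and> frob_p 1 [lucas i, lucas (i + 2), lucas (2 * i + 2)]
        = (3 * int (fib (i - 1)) - 1) * Li2 + int (lucas (2 * i + 2)) - Li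
    \<and> (let r = (lucas i - 1) div fib k in
        r \<ge> 1 \<longrightarrow>
        frob_p 1 [lucas i, lucas (i + 2), lucas (i + k)] =
          (if (Li - int r * int (fib k)) * Li2 \<ge> int (fib (k - 2)) * Li
           then (Li - int r * int (fib k) - 1) * Li2 + (int r + 1) * Lik - Li
           else (int (fib k) - 1) * Li2 + int r * Lik - Li))"
proof -
  have "1 \<le> i" "2 \<le> k"
    using hi hk by simp_all
  then show ?thesis
    using frob_1_lucas_large_k frob_1_lucas_small_k[OF _ _ refl] frob_1_lucas_2i3[OF hi]
      frob_1_lucas_2i2[OF hi]
    unfolding Li_def Li2_def Lik_def Let_def by simp
qed

end
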